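(* Let $n\ge 5$. Then for every $1\le r\le n$, the set $N(W_r)$ (of size $n-1$) is not a strong resolving set of $L(n)$.
   Context: For $n\ge 5$, $H(n)$ is the graph with vertex set $V_1\cup V_2$, where $V_1=\{v_1,\dots,v_n\}$ and $V_2=\{v_iv_j: 1\le i<j\le n\}$, and $v_r$ is adjacent to $v_iv_j$ iff $r\in\{i,j\}$ (no other edges). $L(n)$ is the line graph of $H(n)$: its vertices are the edges $\{v_r,v_iv_j\}$ of $H(n)$ (with $r\in\{i,j\}$), two being adjacent iff they share an endpoint. For $1\le r\le n$, $W_r$ is the set of vertices of $L(n)$ of the form $\{v_r,v_iv_j\}$; it is a maximal clique of size $n-1$. $N(W_r)$ denotes the set of vertices of $L(n)$ not in $W_r$ adjacent to some vertex of $W_r$, i.e. $N(W_r)=\{\{v_k,v_iv_j\}: k\neq r,\ \{i,j\}=\{r,k\}\}$. A set $Q\subseteq V(G)$ is a strong resolving set of $G$ if for any two distinct vertices $p,q$ there is $s\in Q$ such that $p$ lies on some shortest $q$–$s$ path or $q$ lies on some shortest $p$–$s$ path. *)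

theory Defs
  imports Main
begin

definition walk :: "'a set \<Rightarrow> ('a \<Rightarrow> 'a \<Rightarrow> bool) \<Rightarrow> 'a list \<Rightarrow> bool" where
  "walk V adj xs \<longleftrightarrow> xs \<noteq> [] \<and> set xs \<subseteq> V \<and>
     (\<forall>i. Suc i < length xs \<longrightarrow> adj (xs ! i) (xs ! Suc i))"

definition gdist :: "'a set \<Rightarrow> ('a \<Rightarrow> 'a \<Rightarrow> bool) \<Rightarrow> 'a \<Rightarrow> 'a \<Rightarrow> nat" where
  "gdist V adj u v = (LEAST k. \<exists>xs. walk V adj xs \<and> hd xs = u \<and> last xs = v \<and> length xs = Suc k)"

definition shortest_path :: "'a set \<Rightarrow> ('a \<Rightarrow> 'a \<Rightarrow> bool) \<Rightarrow> 'a \<Rightarrow> 'a \<Rightarrow> 'a list \<Rightarrow> bool" where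
  "shortest_path V adj u v xs \<longleftrightarrow> walk V adj xs \<and> hd xs = u \<and> last xs = v \<and>
     length xs = Suc (gdist V adj u v)"

definition on_shortest :: "'a set \<Rightarrow> ('a \<Rightarrow> 'a \<Rightarrow> bool) \<Rightarrow> 'a \<Rightarrow> 'a \<Rightarrow> 'a \<Rightarrow> bool" where
  "on_shortest V adj p q s \<longleftrightarrow> (\<exists>xs. shortest_path V adj q s xs \<and> p \<in> set xs)"

definition strong_resolving_set :: "'a set \<Rightarrow> ('a \<Rightarrow> 'a \<Rightarrow> bool) \<Rightarrow> 'a set \<Rightarrow> bool" where
  "strong_resolving_set V adj Q \<longleftrightarrow> Q \<subseteq> V \<and>
     (\<forall>p\<in>V. \<forall>q\<in>V. p \<noteq> q \<longrightarrow>
        (\<exists>s\<in>Q. on_shortest V adj p q s \<or> on_shortest V adj q p s))"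

definition nbhd :: "'a set \<Rightarrow> ('a \<Rightarrow> 'a \<Rightarrow> bool) \<Rightarrow> 'a set \<Rightarrow> 'a set" where
  "nbhd V adj W = {x \<in> V - W. \<exists>w\<in>W. adj x w}"

(* L(n): the vertex {v_r, v_i v_j} of L(n) (an edge of H(n)) is encoded as the pair (r, {i,j}),
   with 1 <= i < j <= n and r \<in> {i,j}. *)
definition L_verts :: "nat \<Rightarrow> (nat \<times> nat set) set" where
  "L_verts n = {(r, e) | r e. \<exists>i j. 1 \<le> i \<and> i < j \<and> j \<le> n \<and> e = {i, j} \<and> r \<in> e}"

(* two distinct edges of H(n) are adjacent in L(n) iff they share an endpoint,
   i.e. the same vertex v_r of V_1 or the same vertex v_iv_j of V_2 *)
definition L_adj :: "nat \<times> nat set \<Rightarrow> nat \<times> nat set \<Rightarrow> bool" where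
  "L_adj x y \<longleftrightarrow> x \<noteq> y \<and> (fst x = fst y \<or> snd x = snd y)"

definition W :: "nat \<Rightarrow> nat \<Rightarrow> (nat \<times> nat set) set" where
  "W n r = {x \<in> L_verts n. fst x = r}"

end

theory Submission
  imports Defs
begin

text \<open>Pick a, b, c, d distinct from each other and from r (possible as n \<ge> 5), and let
  p = (a, {a,b}), q = (c, {c,d}); neither lies in N(W_r), as r is not an endpoint of v_a v_b or
  v_c v_d. Any two vertices (x, e), (z, f) of L(n) are joined by the walk through (x, {x,z}) and
  (z, {x,z}), so L(n) has diameter at most 3. But p and q are neither adjacent nor have a common
  neighbour, so a shortest path of length at most 3 starting at q can meet p only in its last
  vertex, and symmetrically for p. Hence no vertex of N(W_r) strongly resolves p and q.\<close>

definition far_apart :: "'a set \<Rightarrow> ('a \<Rightarrow> 'a \<Rightarrow> bool) \<Rightarrow> 'a \<Rightarrow> 'a \<Rightarrow> bool" where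
  "far_apart V adj u v \<longleftrightarrow> u \<noteq> v \<and> \<not> adj u v \<and> (\<forall>w\<in>V. \<not> (adj u w \<and> adj w v))"

lemma walk_single: "walk V adj [x] \<longleftrightarrow> x \<in> V"
  by (auto simp: walk_def)

lemma walk_Cons_Cons: "walk V adj (x # y # xs) \<longleftrightarrow> x \<in> V \<and> adj x y \<and> walk V adj (y # xs)"
proof
  assume "walk V adj (x # y # xs)"
  then have "x \<in> V" "adj x y" "set (y # xs) \<subseteq> V"
    and "\<forall>i. Suc i < length (x # y # xs) \<longrightarrow> adj ((x # y # xs) ! i) ((x # y # xs) ! Suc i)"
    unfolding walk_def by auto
  then show "x \<in> V \<and> adj x y \<and> walk V adj (y # xs)"
    unfolding walk_def by fastforce
next
  assume "x \<in> V \<and> adj x y \<and> walk V adj (y # xs)"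
  then show "walk V adj (x # y # xs)"
    unfolding walk_def by (auto simp: less_Suc_eq_0_disj)
qed

lemma walk_take:
  assumes "walk V adj xs" "0 < m"
  shows "walk V adj (take m xs)"
  using assms set_take_subset[of m xs] unfolding walk_def by auto

definition walk_within :: "'a set \<Rightarrow> ('a \<Rightarrow> 'a \<Rightarrow> bool) \<Rightarrow> nat \<Rightarrow> 'a \<Rightarrow> 'a \<Rightarrow> bool" where
  "walk_within V adj k u v \<longleftrightarrow>
     (\<exists>xs. walk V adj xs \<and> hd xs = u \<and> last xs = v \<and> length xs \<le> Suc k)"

lemma walk_within_refl: "v \<in> V \<Longrightarrow> walk_within V adj 0 v v"
  unfolding walk_within_def by (intro exI[of _ "[v]"]) (simp add: walk_single)

lemma walk_within_Cons:
  assumes "walk_within V adj k y v" "x \<in> V" "x = y \<or> adj x y"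
  shows "walk_within V adj (Suc k) x v"
proof -
  obtain xs where xs: "walk V adj xs" "hd xs = y" "last xs = v" "length xs \<le> Suc k"
    using assms(1) unfolding walk_within_def by blast
  then obtain ys where ys: "xs = y # ys" unfolding walk_def by (cases xs) auto
  show ?thesis
  proof (cases "x = y")
    case True
    with xs show ?thesis unfolding walk_within_def by auto
  next
    case False
    with assms(2,3) xs ys have "walk V adj (x # xs)" by (simp add: walk_Cons_Cons)
    with xs ys show ?thesis unfolding walk_within_def by (intro exI[of _ "x # xs"]) auto
  qed
qed

lemma gdist_le_if_walk_within:
  assumes "walk_within V adj k u v"
  shows "gdist V adj u v \<le> k"
proof -
  obtain xs where xs: "walk V adj xs" "hd xs = u" "last xs = v" "length xs \<le> Suc k"
    using assms unfolding walk_within_def by blast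
  then have "xs \<noteq> []" unfolding walk_def by blast
  then have "length xs = Suc (length xs - 1)" by simp
  with xs have "gdist V adj u v \<le> length xs - 1"
    unfolding gdist_def by (intro Least_le) blast
  with xs(4) show ?thesis by linarith
qed

lemma on_shortest_imp_shorter_walk:
  assumes "on_shortest V adj p q s" "p \<noteq> s"
  obtains ys where "walk V adj ys" "hd ys = q" "last ys = p" "length ys \<le> gdist V adj q s"
proof -
  obtain xs where xs: "walk V adj xs" "hd xs = q" "last xs = s"
    "length xs = Suc (gdist V adj q s)" "p \<in> set xs"
    using assms(1) unfolding on_shortest_def shortest_path_def by blast
  then obtain i where i: "i < length xs" "xs ! i = p" by (metis in_set_conv_nth)
  have "i \<noteq> gdist V adj q s"
    using xs(3,4) i assms(2) by (metis diff_Suc_1 last_conv_nth list.size(3) nat.distinct(1))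
  then have "Suc i \<le> gdist V adj q s" using i xs(4) by linarith
  moreover have "last (take (Suc i) xs) = p" using i by (simp add: take_Suc_conv_app_nth)
  ultimately show thesis
    using that[of "take (Suc i) xs"] walk_take[OF xs(1)] xs(2) i(1) by simp
qed

lemma far_apart_walk_length:
  assumes "walk V adj xs" "hd xs = u" "last xs = v" "far_apart V adj u v"
  shows "4 \<le> length xs"
proof (rule ccontr)
  assume "\<not> 4 \<le> length xs"
  moreover have "xs \<noteq> []" using assms(1) unfolding walk_def by blast
  ultimately consider x where "xs = [x]" | x y where "xs = [x, y]" | x y z where "xs = [x, y, z]"
    by (cases xs; cases "tl xs"; cases "tl (tl xs)"; cases "tl (tl (tl xs))") auto
  then show False
    using assms by cases (auto simp: far_apart_def walk_Cons_Cons walk_single)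
qed

lemma on_shortest_far_apart_eq_endpoint:
  assumes "on_shortest V adj p q s" "far_apart V adj q p" "gdist V adj q s \<le> 3"
  shows "p = s"
proof (rule ccontr)
  assume "p \<noteq> s"
  with assms(1) obtain ys
    where "walk V adj ys" "hd ys = q" "last ys = p" "length ys \<le> gdist V adj q s"
    by (rule on_shortest_imp_shorter_walk)
  with far_apart_walk_length[of V adj ys q p] assms(2,3) show False by simp
qed

lemma far_apart_pair_not_strongly_resolved:
  assumes "p \<in> V" "q \<in> V" "far_apart V adj p q" "far_apart V adj q p"
    and diam: "\<forall>u\<in>V. \<forall>v\<in>V. gdist V adj u v \<le> 3"
    and "p \<notin> Q" "q \<notin> Q"
  shows "\<not> strong_resolving_set V adj Q"
proof
  assume "strong_resolving_set V adj Q"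
  moreover have "p \<noteq> q" using assms(3) unfolding far_apart_def by blast
  ultimately obtain s where "s \<in> Q" "s \<in> V"
    and "on_shortest V adj p q s \<or> on_shortest V adj q p s"
    using assms(1,2) unfolding strong_resolving_set_def by blast
  then show False
    using on_shortest_far_apart_eq_endpoint[of V adj p q s] diam assms
      on_shortest_far_apart_eq_endpoint[of V adj q p s] by blast
qed

lemma L_verts_memI:
  assumes "x \<noteq> z" "x \<in> {1..n}" "z \<in> {1..n}"
  shows "(x, {x, z}) \<in> L_verts n"
proof -
  have "{x, z} = {min x z, max x z}" by (auto simp: min_def max_def)
  moreover have "1 \<le> min x z" "min x z < max x z" "max x z \<le> n" using assms by auto
  ultimately show ?thesis unfolding L_verts_def by blast
qed

lemma L_verts_fst_mem_snd: "u \<in> L_verts n \<Longrightarrow> fst u \<in> snd u"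
  unfolding L_verts_def by auto

lemma L_verts_snd_eq:
  assumes "u \<in> L_verts n" "y \<in> snd u" "y \<noteq> fst u"
  shows "snd u = {fst u, y}"
  using assms unfolding L_verts_def by auto

lemma L_verts_fst_range: "u \<in> L_verts n \<Longrightarrow> fst u \<in> {1..n}"
  unfolding L_verts_def by auto

lemma L_gdist_le_3:
  assumes u: "u \<in> L_verts n" and v: "v \<in> L_verts n"
  shows "gdist (L_verts n) L_adj u v \<le> 3"
proof (cases "fst u = fst v")
  case True
  then have "u = v \<or> L_adj u v" unfolding L_adj_def by blast
  with u v have "walk_within (L_verts n) L_adj 1 u v"
    using walk_within_Cons[OF walk_within_refl] by simp
  then show ?thesis using gdist_le_if_walk_within by fastforce
next
  case False
  define x where "x = fst u"
  define z where "z = fst v"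
  define m1 where "m1 = (x, {x, z})"
  define m2 where "m2 = (z, {x, z})"
  have "m1 \<in> L_verts n" "m2 \<in> L_verts n"
    using False L_verts_memI[of x z n] L_verts_memI[of z x n] L_verts_fst_range[OF u]
      L_verts_fst_range[OF v] unfolding x_def z_def m1_def m2_def
    by (auto simp: insert_commute)
  moreover have "m2 = v \<or> L_adj m2 v" "L_adj m1 m2" "u = m1 \<or> L_adj u m1"
    using False unfolding m1_def m2_def x_def z_def L_adj_def by auto
  ultimately have "walk_within (L_verts n) L_adj 3 u v"
    using u v walk_within_refl walk_within_Cons by (metis numeral_3_eq_3 One_nat_def)
  then show ?thesis by (rule gdist_le_if_walk_within)
qed

lemma nbhd_W_eq:
  assumes "r \<in> {1..n}"
  shows "nbhd (L_verts n) L_adj (W n r) = (\<lambda>k. (k, {k, r})) ` ({1..n} - {r})"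
proof
  show "nbhd (L_verts n) L_adj (W n r) \<subseteq> (\<lambda>k. (k, {k, r})) ` ({1..n} - {r})"
  proof
    fix u assume u: "u \<in> nbhd (L_verts n) L_adj (W n r)"
    then obtain w where w: "w \<in> L_verts n" "fst w = r" "L_adj u w"
      and uV: "u \<in> L_verts n" and ur: "fst u \<noteq> r"
      unfolding nbhd_def W_def by auto
    then have "snd u = snd w" unfolding L_adj_def by auto
    with w have "r \<in> snd u" using L_verts_fst_mem_snd[OF w(1)] by simp
    with uV ur have "snd u = {fst u, r}" by (intro L_verts_snd_eq) auto
    then have "u = (\<lambda>k. (k, {k, r})) (fst u)" by (simp add: prod_eq_iff)
    moreover have "fst u \<in> {1..n} - {r}" using L_verts_fst_range[OF uV] ur by simp
    ultimately show "u \<in> (\<lambda>k. (k, {k, r})) ` ({1..n} - {r})" by (rule image_eqI)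
  qed
next
  show "(\<lambda>k. (k, {k, r})) ` ({1..n} - {r}) \<subseteq> nbhd (L_verts n) L_adj (W n r)"
  proof
    fix u assume "u \<in> (\<lambda>k. (k, {k, r})) ` ({1..n} - {r})"
    then obtain k where k: "k \<in> {1..n}" "k \<noteq> r" and u: "u = (k, {k, r})" by blast
    have "(r, {k, r}) \<in> W n r"
      using L_verts_memI[of r k n] k assms unfolding W_def by (simp add: insert_commute)
    moreover have "u \<in> L_verts n" "u \<notin> W n r" "L_adj u (r, {k, r})"
      using L_verts_memI[of k r n] k assms u unfolding W_def L_adj_def by auto
    ultimately show "u \<in> nbhd (L_verts n) L_adj (W n r)" unfolding nbhd_def by blast
  qed
qed

lemma card_nbhd_W:
  assumes "r \<in> {1..n}"
  shows "card (nbhd (L_verts n) L_adj (W n r)) = n - 1"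
proof -
  have "inj_on (\<lambda>k. (k, {k, r})) ({1..n} - {r})" by (rule inj_onI) auto
  then show ?thesis using assms by (simp add: nbhd_W_eq card_image)
qed

lemma L_far_apart:
  assumes "{a, b} \<inter> {c, d} = {}"
  shows "far_apart (L_verts n) L_adj (a, {a, b}) (c, {c, d})"
  unfolding far_apart_def
proof (intro conjI ballI notI)
  have a: "a \<notin> {c, d}" and c: "c \<notin> {a, b}" using assms by auto
  then have ne: "{a, b} \<noteq> {c, d}" by blast
  with a show "(a, {a, b}) = (c, {c, d}) \<Longrightarrow> False"
    and "L_adj (a, {a, b}) (c, {c, d}) \<Longrightarrow> False"
    unfolding L_adj_def by auto
  fix w assume w: "w \<in> L_verts n" and "L_adj (a, {a, b}) w \<and> L_adj w (c, {c, d})"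
  then have "fst w = a \<or> snd w = {a, b}" "fst w = c \<or> snd w = {c, d}"
    unfolding L_adj_def by auto
  with a c ne show False using L_verts_fst_mem_snd[OF w] by blast
qed

lemma four_indices_avoiding:
  assumes "5 \<le> n"
  obtains a b c d :: nat where "distinct [a, b, c, d, r]" "{a, b, c, d} \<subseteq> {1..n}"
proof -
  have "distinct [if r = 1 then 5 else 1, if r = 2 then 5 else 2, if r = 3 then 5 else 3,
      if r = 4 then 5 else 4, r]"
    "{if r = 1 then 5 else 1, if r = 2 then 5 else 2, if r = 3 then 5 else 3,
      if r = 4 then 5 else 4} \<subseteq> {1..n}"
    using assms by auto
  then show thesis by (rule that)
qed

theorem proposition3p3:
  fixes n r :: nat
  assumes "n \<ge> 5" and "1 \<le> r" and "r \<le> n"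
  shows "card (nbhd (L_verts n) L_adj (W n r)) = n - 1 \<and>
         \<not> strong_resolving_set (L_verts n) L_adj (nbhd (L_verts n) L_adj (W n r))"
proof
  have r: "r \<in> {1..n}" using assms(2,3) by simp
  then show "card (nbhd (L_verts n) L_adj (W n r)) = n - 1" by (rule card_nbhd_W)
  obtain a b c d where abcd: "distinct [a, b, c, d, r]" "{a, b, c, d} \<subseteq> {1..n}"
    using four_indices_avoiding[OF assms(1)] .
  define p where "p = (a, {a, b})"
  define q where "q = (c, {c, d})"
  have L: "p \<in> L_verts n" "q \<in> L_verts n"
    using abcd unfolding p_def q_def by (auto intro!: L_verts_memI)
  have far: "far_apart (L_verts n) L_adj p q" "far_apart (L_verts n) L_adj q p"
    using abcd(1) unfolding p_def q_def by (auto intro!: L_far_apart)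
  have diam: "\<forall>u\<in>L_verts n. \<forall>v\<in>L_verts n. gdist (L_verts n) L_adj u v \<le> 3"
    using L_gdist_le_3 by blast
  have "r \<in> snd x" if "x \<in> nbhd (L_verts n) L_adj (W n r)" for x
    using that unfolding nbhd_W_eq[OF r] by auto
  then have outside: "p \<notin> nbhd (L_verts n) L_adj (W n r)"
    "q \<notin> nbhd (L_verts n) L_adj (W n r)"
    using abcd(1) unfolding p_def q_def by force+
  show "\<not> strong_resolving_set (L_verts n) L_adj (nbhd (L_verts n) L_adj (W n r))"
    by (rule far_apart_pair_not_strongly_resolved[OF L far diam outside])
qed

end
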